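(* Let $(\mathcal J_1,\mathcal J_2,\mathcal J_3)$ be a generalized almost hypercomplex structure on a Courant algebroid $E$. Then, identifying $\Lambda^3E^*/\mathrm{im}\,\partial_{\mathbb H}$ with $\mathrm{im}\,P$, where $P=\frac23\sum_{i=1}^3\Pi_{\mathcal J_i}$, the intrinsic torsion of $(\mathcal J_1,\mathcal J_2,\mathcal J_3)$ is $\frac16\sum_{i=1}^3N_{\mathcal J_i}$.
   Context: A Courant algebroid on $M$ is a real vector bundle $E\to M$ with nondegenerate symmetric bilinear form $\langle\cdot,\cdot\rangle$, an $\mathbb R$-bilinear bracket $[\cdot,\cdot]$ on $\Gamma(E)$ and bundle map $\pi:E\to TM$ such that for $u,v,w\in\Gamma(E)$, $f\in C^\infty(M)$: $[u,[v,w]]=[[u,v],w]+[v,[u,w]]$; $\pi([u,v])=[\pi(u),\pi(v)]$; $[u,fv]=\pi(u)(f)v+f[u,v]$; $\pi(u)\langle v,w\rangle=\langle[u,v],w\rangle+\langle v,[u,w]\rangle$; $2\langle[u,u],v\rangle=\pi(v)\langle u,u\rangle$. A generalized connection is an $\mathbb R$-linear $D:\Gamma(E)\to\Gamma(E^*\otimes E)$ with $D_u(fv)=\pi(u)(f)v+fD_uv$ and $\pi(u)\langle v,w\rangle=\langle D_uv,w\rangle+\langle v,D_uw\rangle$; its torsion $T^D(u,v)=D_uv-D_vu-[u,v]+(Du)^*v$ ($(Du)^*$ adjoint of $w\mapsto D_wu$) is viewed as the 3-form $\langle T^D(u,v),w\rangle$. A generalized almost complex structure is a $\langle\cdot,\cdot\rangle$-orthogonal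 $\mathcal J$ with $\mathcal J^2=-\mathrm{Id}$, with Nijenhuis tensor $N_{\mathcal J}(u,v)=[\mathcal Ju,\mathcal Jv]-[u,v]-\mathcal J([\mathcal Ju,v]+[u,\mathcal Jv])$, viewed as the 3-form $\langle N_{\mathcal J}(u,v),w\rangle$. A generalized almost hypercomplex structure is a triple of pairwise anticommuting generalized almost complex structures with $\mathcal J_3=\mathcal J_1\mathcal J_2$. $\Lambda^{1,1}_{\mathbb H}E^*$ is the bundle of 2-forms $\beta$ with $\beta(\mathcal J_iu,\mathcal J_iv)=\beta(u,v)$ for $i=1,2,3$; $\partial_{\mathbb H}:E^*\otimes\Lambda^{1,1}_{\mathbb H}E^*\to\Lambda^3E^*$, $(\partial_{\mathbb H}\eta)(u,v,w)=\eta(u,v,w)+\eta(w,u,v)+\eta(v,w,u)$. For a generalized almost complex structure $\mathcal J$, $(\Pi_{\mathcal J}\alpha)(u,v,w)=\frac14(\alpha(u,v,w)-\alpha(u,\mathcal Jv,\mathcal Jw)-\alpha(\mathcal Ju,v,\mathcal Jw)-\alpha(\mathcal Ju,\mathcal Jv,w))$ on $\Lambda^3E^*$. The map $P$ is a projector on $\Lambda^3E^*$ with $\ker P=\mathrm{im}\,\partial_{\mathbb H}$, which gives the identification. The intrinsic torsion is the class in $\Lambda^3E^*/\mathrm{im}\,\partial_{\mathbb H}$ of $T^D$ for any generalized connection $D$ with $D\mathcal J_i=0$, $i=1,2,3$; under the identification it is $P(T^D)$. *)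

theory Defs
  imports Main "HOL.Real_Vector_Spaces"
begin

text \<open>The type 'r plays the role of
C-infinity(M) (a commutative real algebra), the type 's the role of Gamma(E), an
'r-module via scale. The anchor is encoded by its action on functions: anchor u is
the derivation f maps to pi(u)(f). Tensors (3-forms) are 'r-valued functions of three
sections.\<close>

definition derivation :: "('r::{comm_ring_1,real_algebra_1} \<Rightarrow> 'r) \<Rightarrow> bool" where
  "derivation X \<longleftrightarrow>
     (\<forall>f g. X (f + g) = X f + X g) \<and>
     (\<forall>(c::real) f. X (scaleR c f) = scaleR c (X f)) \<and>
     (\<forall>f g. X (f * g) = X f * g + f * X g)"

definition courant_algebroid ::
  "('r::{comm_ring_1,real_algebra_1} \<Rightarrow> 's::ab_group_add \<Rightarrow> 's) \<Rightarrow> ('s \<Rightarrow> 's \<Rightarrow> 'r)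
   \<Rightarrow> ('s \<Rightarrow> 's \<Rightarrow> 's) \<Rightarrow> ('s \<Rightarrow> 'r \<Rightarrow> 'r) \<Rightarrow> bool" where
  "courant_algebroid scale pair br anchor \<longleftrightarrow>
     module scale \<and>
     \<comment> \<open>symmetric bilinear (over functions), nondegenerate form\<close>
     (\<forall>u v w. pair (u + v) w = pair u w + pair v w) \<and>
     (\<forall>f u w. pair (scale f u) w = f * pair u w) \<and>
     (\<forall>u v. pair u v = pair v u) \<and>
     (\<forall>u. (\<forall>v. pair u v = 0) \<longrightarrow> u = 0) \<and>
     \<comment> \<open>anchor: bundle map into vector fields (function-linear, valued in derivations)\<close>
     (\<forall>u. derivation (anchor u)) \<and>
     (\<forall>u v g. anchor (u + v) g = anchor u g + anchor v g) \<and>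
     (\<forall>f u g. anchor (scale f u) g = f * anchor u g) \<and>
     \<comment> \<open>R-bilinear bracket\<close>
     (\<forall>u v w. br (u + v) w = br u w + br v w) \<and>
     (\<forall>u v w. br u (v + w) = br u v + br u w) \<and>
     (\<forall>(c::real) u v. br (scale (of_real c) u) v = scale (of_real c) (br u v)) \<and>
     (\<forall>(c::real) u v. br u (scale (of_real c) v) = scale (of_real c) (br u v)) \<and>
     \<comment> \<open>Courant axioms\<close>
     (\<forall>u v w. br u (br v w) = br (br u v) w + br v (br u w)) \<and>
     (\<forall>u v f. anchor (br u v) f = anchor u (anchor v f) - anchor v (anchor u f)) \<and>
     (\<forall>u v f. br u (scale f v) = scale (anchor u f) v + scale f (br u v)) \<and>
     (\<forall>u v w. anchor u (pair v w) = pair (br u v) w + pair v (br u w)) \<and>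
     (\<forall>u v. 2 * pair (br u u) v = anchor v (pair u u))"

definition gen_almost_complex ::
  "('r::{comm_ring_1,real_algebra_1} \<Rightarrow> 's::ab_group_add \<Rightarrow> 's) \<Rightarrow> ('s \<Rightarrow> 's \<Rightarrow> 'r)
   \<Rightarrow> ('s \<Rightarrow> 's) \<Rightarrow> bool" where
  "gen_almost_complex scale pair J \<longleftrightarrow>
     (\<forall>u v. J (u + v) = J u + J v) \<and>
     (\<forall>f u. J (scale f u) = scale f (J u)) \<and>
     (\<forall>u v. pair (J u) (J v) = pair u v) \<and>
     (\<forall>u. J (J u) = - u)"

definition gen_almost_hypercomplex ::
  "('r::{comm_ring_1,real_algebra_1} \<Rightarrow> 's::ab_group_add \<Rightarrow> 's) \<Rightarrow> ('s \<Rightarrow> 's \<Rightarrow> 'r)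
   \<Rightarrow> ('s \<Rightarrow> 's) \<Rightarrow> ('s \<Rightarrow> 's) \<Rightarrow> ('s \<Rightarrow> 's) \<Rightarrow> bool" where
  "gen_almost_hypercomplex scale pair J1 J2 J3 \<longleftrightarrow>
     gen_almost_complex scale pair J1 \<and> gen_almost_complex scale pair J2 \<and>
     gen_almost_complex scale pair J3 \<and>
     (\<forall>u. J1 (J2 u) = - J2 (J1 u)) \<and>
     (\<forall>u. J1 (J3 u) = - J3 (J1 u)) \<and>
     (\<forall>u. J2 (J3 u) = - J3 (J2 u)) \<and>
     (\<forall>u. J3 u = J1 (J2 u))"

text \<open>Generalized connection: D u v stands for D_u v.\<close>
definition gen_connection ::
  "('r::{comm_ring_1,real_algebra_1} \<Rightarrow> 's::ab_group_add \<Rightarrow> 's) \<Rightarrow> ('s \<Rightarrow> 's \<Rightarrow> 'r)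
   \<Rightarrow> ('s \<Rightarrow> 'r \<Rightarrow> 'r) \<Rightarrow> ('s \<Rightarrow> 's \<Rightarrow> 's) \<Rightarrow> bool" where
  "gen_connection scale pair anchor D \<longleftrightarrow>
     (\<forall>u u' v. D (u + u') v = D u v + D u' v) \<and>
     (\<forall>f u v. D (scale f u) v = scale f (D u v)) \<and>
     (\<forall>u v v'. D u (v + v') = D u v + D u v') \<and>
     (\<forall>u f v. D u (scale f v) = scale (anchor u f) v + scale f (D u v)) \<and>
     (\<forall>u v w. anchor u (pair v w) = pair (D u v) w + pair v (D u w))"

definition preserves :: "('s \<Rightarrow> 's \<Rightarrow> 's) \<Rightarrow> ('s \<Rightarrow> 's) \<Rightarrow> bool" where
  "preserves D J \<longleftrightarrow> (\<forall>u v. D u (J v) = J (D u v))"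

text \<open>Torsion as a 3-form: <T(u,v),w> = <D_u v - D_v u - [u,v], w> + <(Du)^* v, w>,
  where <(Du)^* v, w> = <v, D_w u>.\<close>
definition torsion3 ::
  "('s::ab_group_add \<Rightarrow> 's \<Rightarrow> 'r::comm_ring_1) \<Rightarrow> ('s \<Rightarrow> 's \<Rightarrow> 's) \<Rightarrow> ('s \<Rightarrow> 's \<Rightarrow> 's)
   \<Rightarrow> 's \<Rightarrow> 's \<Rightarrow> 's \<Rightarrow> 'r" where
  "torsion3 pair br D u v w = pair (D u v - D v u - br u v) w + pair v (D w u)"

definition nijenhuis3 ::
  "('s::ab_group_add \<Rightarrow> 's \<Rightarrow> 'r::comm_ring_1) \<Rightarrow> ('s \<Rightarrow> 's \<Rightarrow> 's) \<Rightarrow> ('s \<Rightarrow> 's)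
   \<Rightarrow> 's \<Rightarrow> 's \<Rightarrow> 's \<Rightarrow> 'r" where
  "nijenhuis3 pair br J u v w =
     pair (br (J u) (J v) - br u v - J (br (J u) v + br u (J v))) w"

definition Pi_J ::
  "('s \<Rightarrow> 's) \<Rightarrow> ('s \<Rightarrow> 's \<Rightarrow> 's \<Rightarrow> 'r::real_vector) \<Rightarrow> 's \<Rightarrow> 's \<Rightarrow> 's \<Rightarrow> 'r" where
  "Pi_J J \<alpha> u v w = scaleR (1/4)
     (\<alpha> u v w - \<alpha> u (J v) (J w) - \<alpha> (J u) v (J w) - \<alpha> (J u) (J v) w)"

definition P_H ::
  "('s \<Rightarrow> 's) \<Rightarrow> ('s \<Rightarrow> 's) \<Rightarrow> ('s \<Rightarrow> 's) \<Rightarrow> ('s \<Rightarrow> 's \<Rightarrow> 's \<Rightarrow> 'r::real_vector)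
   \<Rightarrow> 's \<Rightarrow> 's \<Rightarrow> 's \<Rightarrow> 'r" where
  "P_H J1 J2 J3 \<alpha> u v w = scaleR (2/3) (Pi_J J1 \<alpha> u v w + Pi_J J2 \<alpha> u v w + Pi_J J3 \<alpha> u v w)"

text \<open>Intrinsic torsion, under the identification with im P: P(T^D) for D with D J_i = 0.\<close>

end

theory Submission
  imports Defs
begin

text \<open>For a connection preserving \<open>J\<close> the projection \<open>\<Pi>\<^sub>J\<close> kills every term of the
torsion involving \<open>D\<close>, because \<open>D\<close> commutes with \<open>J\<close> and \<open>J\<close> is skew for the pairing; the
bracket terms that survive are exactly \<open>N\<^sub>J/4\<close>. Hence \<open>\<Pi>\<^sub>J T\<^sup>D = N\<^sub>J/4\<close> for each \<open>J\<^sub>i\<close>,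
and summing with the factor \<open>2/3\<close> gives the intrinsic torsion \<open>(N\<^sub>1 + N\<^sub>2 + N\<^sub>3)/6\<close>.\<close>

lemma skew_if_orthogonal_complex:
  fixes pair :: "'s::ab_group_add \<Rightarrow> 's \<Rightarrow> 'r::ab_group_add"
  assumes additive_right: "\<And>w. additive (pair w)"
    and orth: "\<And>u v. pair (J u) (J v) = pair u v"
    and JJ: "\<And>u. J (J u) = - u"
  shows "pair (J u) v = - pair u (J v)"
proof -
  have "pair (J u) v = - pair (J u) (J (J v))"
    using JJ additive.minus[OF additive_right] by simp
  then show ?thesis
    using orth by simp
qed

lemma Pi_J_torsion3:
  fixes pair :: "'s::ab_group_add \<Rightarrow> 's \<Rightarrow> 'r::{comm_ring_1,real_algebra_1}"
  assumes pair_add: "\<And>u v w. pair (u + v) w = pair u w + pair v w"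
    and pair_sym: "\<And>u v. pair u v = pair v u"
    and J: "gen_almost_complex scale pair J"
    and "preserves D J"
  shows "Pi_J J (torsion3 pair br D) = (\<lambda>u v w. scaleR (1/4) (nijenhuis3 pair br J u v w))"
proof -
  have left: "additive (\<lambda>u. pair u w)" for w
    by (simp add: additive.intro pair_add)
  have right: "additive (pair w)" for w
    by (simp add: additive.intro pair_add pair_sym[of w])
  have J_add: "J (u + v) = J u + J v"
    and orth: "pair (J u) (J v) = pair u v"
    and JJ: "J (J u) = - u" for u v
    using J unfolding gen_almost_complex_def by auto
  have skew: "pair (J u) v = - pair u (J v)" for u v
    by (rule skew_if_orthogonal_complex[where pair = pair, OF right orth JJ])
  have DJ: "D u (J v) = J (D u v)" for u v
    using \<open>preserves D J\<close> unfolding preserves_def by simp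
  show ?thesis
    unfolding Pi_J_def torsion3_def nijenhuis3_def
    by (simp add: additive.diff[OF left] additive.diff[OF right] additive.add[OF left]
        additive.minus[OF left] additive.minus[OF right] J_add skew DJ JJ orth algebra_simps)
qed

theorem corollary4p2:
  fixes scale :: "'r::{comm_ring_1,real_algebra_1} \<Rightarrow> 's::ab_group_add \<Rightarrow> 's"
    and pair :: "'s \<Rightarrow> 's \<Rightarrow> 'r"
    and br :: "'s \<Rightarrow> 's \<Rightarrow> 's"
    and anchor :: "'s \<Rightarrow> 'r \<Rightarrow> 'r"
    and J1 J2 J3 :: "'s \<Rightarrow> 's"
    and D :: "'s \<Rightarrow> 's \<Rightarrow> 's"
  assumes "courant_algebroid scale pair br anchor"
    and "gen_almost_hypercomplex scale pair J1 J2 J3"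
    and "gen_connection scale pair anchor D"
    and "preserves D J1" and "preserves D J2" and "preserves D J3"
  shows "P_H J1 J2 J3 (torsion3 pair br D) =
         (\<lambda>u v w. scaleR (1/6) (nijenhuis3 pair br J1 u v w + nijenhuis3 pair br J2 u v w
                                 + nijenhuis3 pair br J3 u v w))"
proof -
  have pair_add: "\<And>u v w. pair (u + v) w = pair u w + pair v w"
    and pair_sym: "\<And>u v. pair u v = pair v u"
    using assms(1) unfolding courant_algebroid_def by auto
  have "gen_almost_complex scale pair J1" "gen_almost_complex scale pair J2"
    "gen_almost_complex scale pair J3"
    using assms(2) unfolding gen_almost_hypercomplex_def by auto
  note Pi_J = this[THEN Pi_J_torsion3[OF pair_add pair_sym]]
  show ?thesis
    unfolding P_H_def
    by (simp add: Pi_J assms(4-6) scaleR_add_right[symmetric])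
qed

end
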